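(* Let $m\ge1$, $\boldsymbol\gamma=(\gamma_1,\ldots,\gamma_m)\in\mathbb{N}^m$ and $f_1,\ldots,f_{m+1}$ arithmetic functions. For $1\le j\le m+1$ and fixed $n_1,\ldots,n_{j-1},n_{j+1},\ldots,n_{m+1}\in\mathbb{N}$ put \[ \Phi_j(s):=\sum_{n_j=1}^\infty S^{\boldsymbol\gamma}_{f_1,\ldots,f_{m+1}}(n_1,\ldots,n_{m+1})\,n_j^{-s}. \] (i) For $\Re(s)>\sigma(f_1)$, \[ \Phi_1(s)=L(s;f_1)\,F_1(n_2),\qquad F_1:=\delta^{-s}\bigl(G_2*_{\gamma_1}\delta^s\bigr),\quad G_2:=S^{(\gamma_2,\ldots,\gamma_m)}_{f_2,\ldots,f_{m+1}}(\,\cdot\,,n_3,\ldots,n_{m+1}), \] i.e. $F_1(n_2)=\sum_{d\in\mathbb{N},\,d^{\gamma_1}\mid n_2}G_2(d^{\gamma_1})\,d^{-\gamma_1 s}$. (ii) For $2\le j\le m+1$ and $\Re(s)>1$, \[ \Phi_j(s)=\zeta(s)\,S^{(\gamma_1,\ldots,\gamma_{j-2})}_{f_1,\ldots,f_{j-2},F_j}(n_1,\ldots,n_{j-1}), \] where $F_j:=\delta^{-s}\bigl(G_j*_{\gamma_{j-1}}(\delta^sf_{j-1})\bigr)$ and $G_j:=S^{(\gamma_j,\ldots,\gamma_m)}_{f_j,\ldots,f_{m+1}}(\,\cdot\,,n_{j+1},\ldots,n_{m+1})$.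
   Context: An arithmetic function is a map $f:\mathbb{N}\to\mathbb{C}$, with $f(x)=0$ for $x\notin\mathbb{N}$; products $gh$ of arithmetic functions are pointwise, and $\delta^x(n):=n^x$ for $x\in\mathbb{C}$. $L(s;f)=\sum_{n\ge1}f(n)n^{-s}$, $\sigma(f)$ its abscissa of absolute convergence, $\zeta$ the Riemann zeta function. For $\gamma\in\mathbb{N}$ and arithmetic functions $g,h$, $(g*_\gamma h)(n):=\sum_{d\in\mathbb{N},\,d^\gamma\mid n}h(n/d^\gamma)\,g(d^\gamma)$. For $k\ge0$, $(\gamma_1,\ldots,\gamma_k)\in\mathbb{N}^k$ and arithmetic functions $g_1,\ldots,g_{k+1}$, \[ S^{(\gamma_1,\ldots,\gamma_k)}_{g_1,\ldots,g_{k+1}}(n_1,\ldots,n_{k+1}):=\sum_{\substack{(d_1,\ldots,d_k)\in\mathbb{N}^k\\ d_i^{\gamma_i}\mid\gcd(n_1,\ldots,n_{i+1})\ (1\le i\le k)}} g_1\Bigl(\frac{n_1}{d_1^{\gamma_1}}\Bigr)g_2\Bigl(\frac{d_1^{\gamma_1}}{d_2^{\gamma_2}}\Bigr)\cdots g_k\Bigl(\frac{d_{k-1}^{\gamma_{k-1}}}{d_k^{\gamma_k}}\Bigr)g_{k+1}\bigl(d_k^{\gamma_k}\bigr), \] with the convention that for $k=0$ (empty parameter list) $S_{g_1}(n_1)=g_1(n_1)$. In (i) and (ii), $G_j$ denotes the arithmetic function $x\mapsto S^{(\gamma_j,\ldots,\gamma_m)}_{f_j,\ldots,f_{m+1}}(x,n_{j+1},\ldots,n_{m+1})$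 (for $j=m+1$ this is $f_{m+1}$), and $F_j$ depends on $s$. *)

theory Defs
  imports "HOL-Analysis.Analysis"
begin

text \<open>Arithmetic functions are modelled as functions nat => complex; only their
values at positive arguments are ever used.\<close>

text \<open>Evaluation of g at the (possibly non-integral) quotient a/b, with the
convention that an arithmetic function vanishes off the positive integers.\<close>
definition qev :: "(nat \<Rightarrow> complex) \<Rightarrow> nat \<Rightarrow> nat \<Rightarrow> complex" where
  "qev g a b = (if b dvd a then g (a div b) else 0)"

definition gconv :: "nat \<Rightarrow> (nat \<Rightarrow> complex) \<Rightarrow> (nat \<Rightarrow> complex) \<Rightarrow> nat \<Rightarrow> complex" where
  "gconv \<gamma> g h n = (\<Sum>d\<in>{d. 1 \<le> d \<and> d ^ \<gamma> dvd n}. h (n div d ^ \<gamma>) * g (d ^ \<gamma>))"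

text \<open>The multiple sum S^{(gs)}_{fs}(ns), with 0-indexed lists:
 gs = [gamma_1..gamma_k], fs = [g_1..g_{k+1}], ns = [n_1..n_{k+1}],
 summation tuple ds = [d_1..d_k] with d_i^{gamma_i} dividing n_1,...,n_{i+1}.\<close>
definition Ssum :: "nat list \<Rightarrow> (nat \<Rightarrow> complex) list \<Rightarrow> nat list \<Rightarrow> complex" where
  "Ssum gs fs ns =
     (\<Sum>ds\<in>{ds. length ds = length gs \<and>
               (\<forall>i<length gs. 1 \<le> ds ! i \<and> (\<forall>l\<le>Suc i. ds ! i ^ (gs ! i) dvd ns ! l))}.
        (let e = (\<lambda>i. if i = 0 then ns ! 0 else ds ! (i - 1) ^ (gs ! (i - 1)))
         in (\<Prod>i<length gs. qev (fs ! i) (e i) (e (Suc i))) * (fs ! length gs) (e (length gs))))"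

definition Lser :: "complex \<Rightarrow> (nat \<Rightarrow> complex) \<Rightarrow> complex" where
  "Lser s f = (\<Sum>n. f (Suc n) * of_nat (Suc n) powr (- s))"

definition abs_abscissa :: "(nat \<Rightarrow> complex) \<Rightarrow> ereal" where
  "abs_abscissa f = Inf {ereal x | x. summable (\<lambda>n. norm (f (Suc n)) * real (Suc n) powr (- x))}"

text \<open>Riemann zeta function on the half-plane Re s > 1 (the only place it is used).\<close>
definition zeta :: "complex \<Rightarrow> complex" where
  "zeta s = (\<Sum>n. of_nat (Suc n) powr (- s))"

end

theory Submission imports Defs begin

text \<open>Peeling off the outermost summation variable gives the recursion
  S(n_1, n_2, n_3, ...) = sum over d^gamma_1 | gcd(n_1, n_2) of f_1(n_1 / d^gamma_1) S'(d^gamma_1, n_3, ...),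
  where S' is the multiple sum for (gamma_2, ..., gamma_m) and (f_2, ..., f_(m+1)).
  If the Dirichlet series runs over n_1 or n_2, the recursion exhibits the coefficients as a
  finite combination of dilated sequences n \<mapsto> a(n / e) (with a = f_1 resp. a = 1), and the
  Dirichlet series of such a sequence is e^-s L(s; a); this gives (i) and the case j = 2 of (ii).
  For j > 2 the recursion is linear in the inner sum, so (ii) follows by induction on j.\<close>

definition Ssum_entry :: "nat list \<Rightarrow> nat \<Rightarrow> nat list \<Rightarrow> nat \<Rightarrow> nat" where
  "Ssum_entry gs n ds i = (if i = 0 then n else ds ! (i - 1) ^ (gs ! (i - 1)))"

definition Ssum_summand :: "nat list \<Rightarrow> (nat \<Rightarrow> complex) list \<Rightarrow> nat \<Rightarrow> nat list \<Rightarrow> complex" where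
  "Ssum_summand gs fs n ds =
     (\<Prod>i<length gs. qev (fs ! i) (Ssum_entry gs n ds i) (Ssum_entry gs n ds (Suc i))) *
     (fs ! length gs) (Ssum_entry gs n ds (length gs))"

definition Ssum_index :: "nat list \<Rightarrow> nat list \<Rightarrow> nat list set" where
  "Ssum_index gs ns = {ds. length ds = length gs \<and>
     (\<forall>i<length gs. 1 \<le> ds ! i \<and> (\<forall>l\<le>Suc i. ds ! i ^ (gs ! i) dvd ns ! l))}"

text \<open>The tuples for which no factor of the summand vanishes for divisibility reasons:
  each d_i^gamma_i divides its predecessor d_(i-1)^gamma_(i-1) (where d_0^gamma_0 stands for n_1),
  so the conditions d_i^gamma_i | n_1, ..., n_(i+1) reduce to d_i^gamma_i | n_(i+1).\<close>
definition Ssum_chains :: "nat list \<Rightarrow> nat list \<Rightarrow> nat list set" where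
  "Ssum_chains gs ns = {ds. length ds = length gs \<and>
     (\<forall>i<length gs. 1 \<le> ds ! i \<and>
        Ssum_entry gs (ns ! 0) ds (Suc i) dvd Ssum_entry gs (ns ! 0) ds i \<and>
        Ssum_entry gs (ns ! 0) ds (Suc i) dvd ns ! Suc i)}"

lemma Ssum_eq_sum_index: "Ssum gs fs ns = sum (Ssum_summand gs fs (ns ! 0)) (Ssum_index gs ns)"
  unfolding Ssum_def Ssum_summand_def Ssum_index_def Ssum_entry_def Let_def by simp

lemma finite_root_divisors:
  fixes n g :: nat
  assumes "1 \<le> n" "1 \<le> g"
  shows "finite {d. 1 \<le> d \<and> d ^ g dvd n}"
proof (rule finite_subset)
  show "{d. 1 \<le> d \<and> d ^ g dvd n} \<subseteq> {d. d dvd n}"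
    using assms(2) by (auto intro: dvd_trans dvd_power)
qed (use assms(1) in simp)

lemma finite_Ssum_index:
  assumes "1 \<le> ns ! 0" "\<forall>i<length gs. 1 \<le> gs ! i"
  shows "finite (Ssum_index gs ns)"
proof (rule finite_subset)
  show "Ssum_index gs ns \<subseteq> {ds. set ds \<subseteq> {d. d dvd ns ! 0} \<and> length ds = length gs}"
    using assms(2) by (fastforce simp: Ssum_index_def in_set_conv_nth intro: dvd_trans dvd_power)
  show "finite {ds. set ds \<subseteq> {d. d dvd ns ! 0} \<and> length ds = length gs}"
    using assms(1) by (intro finite_lists_length_eq) simp
qed

lemma dvd_chain_trans:
  fixes e :: "nat \<Rightarrow> 'a::comm_monoid_mult"
  assumes "\<And>i. i < k \<Longrightarrow> e (Suc i) dvd e i" "l \<le> k"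
  shows "e k dvd e l"
  using assms(2)
proof (induction k rule: dec_induct)
  case (step k)
  then show ?case using assms(1) by (blast intro: dvd_trans)
qed simp

lemma Ssum_chains_subset_index: "Ssum_chains gs ns \<subseteq> Ssum_index gs ns"
proof
  fix ds assume ds: "ds \<in> Ssum_chains gs ns"
  let ?e = "Ssum_entry gs (ns ! 0) ds"
  have "ds ! i ^ (gs ! i) dvd ns ! l" if "i < length gs" "l \<le> Suc i" for i l
  proof -
    have "?e (Suc i) dvd ?e l"
      using ds that by (intro dvd_chain_trans[where k = "Suc i"]) (auto simp: Ssum_chains_def)
    moreover have "?e l dvd ns ! l"
      using ds that by (cases l) (auto simp: Ssum_chains_def Ssum_entry_def)
    ultimately show ?thesis by (auto simp: Ssum_entry_def intro: dvd_trans)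
  qed
  with ds show "ds \<in> Ssum_index gs ns" by (auto simp: Ssum_chains_def Ssum_index_def)
qed

lemma Ssum_summand_eq_0:
  assumes "t < length gs" "\<not> Ssum_entry gs n ds (Suc t) dvd Ssum_entry gs n ds t"
  shows "Ssum_summand gs fs n ds = 0"
  using assms by (auto simp: Ssum_summand_def qev_def intro!: prod_zero bexI[of _ t])

lemma Ssum_eq_sum_chains:
  assumes "1 \<le> ns ! 0" "\<forall>i<length gs. 1 \<le> gs ! i"
  shows "Ssum gs fs ns = sum (Ssum_summand gs fs (ns ! 0)) (Ssum_chains gs ns)"
  unfolding Ssum_eq_sum_index
proof (rule sum.mono_neutral_right)
  show "finite (Ssum_index gs ns)" using assms by (rule finite_Ssum_index)
  show "Ssum_chains gs ns \<subseteq> Ssum_index gs ns" by (rule Ssum_chains_subset_index)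
  show "\<forall>ds\<in>Ssum_index gs ns - Ssum_chains gs ns. Ssum_summand gs fs (ns ! 0) ds = 0"
    by (auto simp: Ssum_index_def Ssum_chains_def Ssum_entry_def intro: Ssum_summand_eq_0)
qed

lemma Ssum_entry_Cons_Suc: "Ssum_entry (g # gs) n (d # ds) (Suc i) = Ssum_entry gs (d ^ g) ds i"
  by (cases i) (simp_all add: Ssum_entry_def)

lemma Ssum_summand_Cons:
  "Ssum_summand (g # gs) (f # fs) n (d # ds) = qev f n (d ^ g) * Ssum_summand gs fs (d ^ g) ds"
proof -
  have "Ssum_entry (g # gs) n (d # ds) 0 = n" "Ssum_entry gs (d ^ g) ds 0 = d ^ g"
    by (simp_all add: Ssum_entry_def)
  then show ?thesis
    unfolding Ssum_summand_def
    by (simp add: prod.lessThan_Suc_shift Ssum_entry_Cons_Suc mult.assoc del: prod.lessThan_Suc)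
qed

lemma Cons_in_Ssum_chains_iff:
  "d # ds \<in> Ssum_chains (g # gs) (n0 # n1 # ns) \<longleftrightarrow>
     1 \<le> d \<and> d ^ g dvd n0 \<and> d ^ g dvd n1 \<and> ds \<in> Ssum_chains gs (d ^ g # ns)"
  unfolding Ssum_chains_def by (simp add: All_less_Suc2 Ssum_entry_Cons_Suc) (auto simp: Ssum_entry_def)

lemma finite_Ssum_chains:
  assumes "1 \<le> ns ! 0" "\<forall>i<length gs. 1 \<le> gs ! i"
  shows "finite (Ssum_chains gs ns)"
  using Ssum_chains_subset_index finite_Ssum_index[OF assms] by (rule finite_subset)

lemma Ssum_chains_Cons:
  "Ssum_chains (g # gs) (n0 # n1 # ns) =
     (\<lambda>(d, ds). d # ds) ` (SIGMA d:{d. 1 \<le> d \<and> d ^ g dvd n0 \<and> d ^ g dvd n1}. Ssum_chains gs (d ^ g # ns))"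
  (is "?C = ?R")
proof
  show "?C \<subseteq> ?R"
  proof
    fix x assume x: "x \<in> ?C"
    then obtain d ds where "x = d # ds" by (cases x) (auto simp: Ssum_chains_def)
    with x show "x \<in> ?R" by (auto simp: Cons_in_Ssum_chains_iff)
  qed
qed (auto simp: Cons_in_Ssum_chains_iff)

lemma Ssum_Cons:
  assumes "1 \<le> n0" "1 \<le> g" "\<forall>i<length gs. 1 \<le> gs ! i"
  shows "Ssum (g # gs) (f # fs) (n0 # n1 # ns) =
    (\<Sum>d | 1 \<le> d \<and> d ^ g dvd n0 \<and> d ^ g dvd n1. qev f n0 (d ^ g) * Ssum gs fs (d ^ g # ns))"
proof -
  define D where "D = {d. 1 \<le> d \<and> d ^ g dvd n0 \<and> d ^ g dvd n1}"
  define C where "C d = Ssum_chains gs (d ^ g # ns)" for d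
  have "finite D"
    using finite_root_divisors[OF assms(1,2)] by (rule finite_subset[rotated]) (auto simp: D_def)
  have "finite (C d)" if "d \<in> D" for d
    using that assms(3) by (auto simp: C_def D_def intro: finite_Ssum_chains)
  have "Ssum (g # gs) (f # fs) (n0 # n1 # ns) =
      sum (Ssum_summand (g # gs) (f # fs) n0) ((\<lambda>(d, ds). d # ds) ` (SIGMA d:D. C d))"
    using assms by (simp add: Ssum_eq_sum_chains Ssum_chains_Cons D_def C_def All_less_Suc2)
  also have "\<dots> = (\<Sum>(d, ds)\<in>(SIGMA d:D. C d). Ssum_summand (g # gs) (f # fs) n0 (d # ds))"
    by (subst sum.reindex) (auto simp: inj_on_def intro!: sum.cong)
  also have "\<dots> = (\<Sum>d\<in>D. \<Sum>ds\<in>C d. qev f n0 (d ^ g) * Ssum_summand gs fs (d ^ g) ds)"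
    using \<open>finite D\<close> \<open>\<And>d. d \<in> D \<Longrightarrow> finite (C d)\<close> by (simp add: sum.Sigma Ssum_summand_Cons)
  also have "\<dots> = (\<Sum>d\<in>D. qev f n0 (d ^ g) * Ssum gs fs (d ^ g # ns))"
    using assms(3) by (intro sum.cong) (auto simp: D_def C_def Ssum_eq_sum_chains sum_distrib_left)
  finally show ?thesis by (simp add: D_def)
qed

lemma Ssum_single: "Ssum [] [f] [n] = f n"
proof -
  have "Ssum_index [] [n] = {[]}" by (auto simp: Ssum_index_def)
  then show ?thesis by (simp add: Ssum_eq_sum_index Ssum_summand_def Ssum_entry_def)
qed

lemma sums_qev_dilate:
  assumes "1 \<le> e" "(\<lambda>n. a (Suc n)) sums L"
  shows "(\<lambda>n. qev a (Suc n) e) sums L"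
proof -
  define h where "h = (\<lambda>n. qev a (Suc n) e)"
  define k where "k n = e * n + (e - 1)" for n
  have "strict_mono k"
  proof (rule strict_monoI)
    fix x y :: nat assume "x < y"
    then have "e * x < e * y" using assms(1) by simp
    then show "k x < k y" unfolding k_def by linarith
  qed
  have "Suc (k n) = e * Suc n" for n
    using assms(1) by (simp add: k_def algebra_simps)
  then have "h (k n) = a (Suc n)" for n
    using assms(1) by (simp add: h_def qev_def)
  then have "(\<lambda>n. h (k n)) sums L" using assms(2) by simp
  moreover have "h n = 0" if "n \<notin> range k" for n
  proof (rule ccontr)
    assume "h n \<noteq> 0"
    then obtain q where q: "Suc n = e * q" by (auto simp: h_def qev_def split: if_splits)
    then have "k (q - 1) = n" using assms(1) by (cases q) (auto simp: k_def algebra_simps)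
    with that show False by auto
  qed
  ultimately have "h sums L"
    using sums_mono_reindex[OF \<open>strict_mono k\<close>, of h] by blast
  then show ?thesis unfolding h_def .
qed

lemma of_nat_mult_powr: "(of_nat (a * b) :: complex) powr z = of_nat a powr z * of_nat b powr z"
  by (simp add: powr_times_real)

lemma sums_Dirichlet_dilate:
  assumes "1 \<le> e" "(\<lambda>n. a (Suc n) * of_nat (Suc n) powr - s) sums L"
  shows "(\<lambda>n. qev a (Suc n) e * of_nat (Suc n) powr - s) sums (of_nat e powr - s * L)"
proof -
  define b where "b k = a k * of_nat (e * k) powr - s" for k
  have "b (Suc n) = of_nat e powr - s * (a (Suc n) * of_nat (Suc n) powr - s)" for n
    by (simp only: b_def of_nat_mult_powr mult_ac)
  then have "(\<lambda>n. b (Suc n)) sums (of_nat e powr - s * L)"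
    using sums_mult[OF assms(2)] by simp
  then have "(\<lambda>n. qev b (Suc n) e) sums (of_nat e powr - s * L)"
    by (rule sums_qev_dilate[OF assms(1)])
  moreover have "qev b (Suc n) e = qev a (Suc n) e * of_nat (Suc n) powr - s" for n
    by (auto simp: qev_def b_def)
  ultimately show ?thesis by simp
qed

lemma sums_Dirichlet_sum_dilates:
  assumes "finite D" "\<And>d. d \<in> D \<Longrightarrow> 1 \<le> e d"
    and "(\<lambda>n. a (Suc n) * of_nat (Suc n) powr - s) sums L"
  shows "(\<lambda>n. (\<Sum>d\<in>D. c d * qev a (Suc n) (e d)) * of_nat (Suc n) powr - s) sums
           (L * (\<Sum>d\<in>D. c d * of_nat (e d) powr - s))"
proof -
  have "(\<lambda>n. \<Sum>d\<in>D. c d * (qev a (Suc n) (e d) * of_nat (Suc n) powr - s)) sums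
          (\<Sum>d\<in>D. c d * (of_nat (e d) powr - s * L))"
    using assms by (intro sums_sum sums_mult sums_Dirichlet_dilate) auto
  then show ?thesis
    by (simp add: sum_distrib_left sum_distrib_right mult_ac)
qed

lemma zeta_sums:
  assumes "1 < Re s"
  shows "(\<lambda>n. of_nat (Suc n) powr - s) sums zeta s"
proof -
  have "summable (\<lambda>n. real n powr - Re s)"
    using assms by (subst summable_real_powr_iff) auto
  then have "summable (\<lambda>n. real (Suc n) powr - Re s)"
    by (subst summable_Suc_iff)
  moreover have "norm (of_nat (Suc n) powr - s :: complex) = real (Suc n) powr - Re s" for n
    by (subst norm_powr_real_powr) auto
  ultimately have "summable (\<lambda>n. norm (of_nat (Suc n) powr - s :: complex))"
    by simp
  then show ?thesis
    unfolding zeta_def by (rule summable_sums[OF summable_norm_cancel])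
qed

lemma Lser_sums:
  assumes "abs_abscissa f < ereal (Re s)"
  shows "(\<lambda>n. f (Suc n) * of_nat (Suc n) powr - s) sums Lser s f"
proof -
  from assms obtain x where x: "summable (\<lambda>n. norm (f (Suc n)) * real (Suc n) powr - x)" "x < Re s"
    unfolding abs_abscissa_def by (auto simp: Inf_less_iff)
  have "norm (f (Suc n) * of_nat (Suc n) powr - s) \<le> norm (f (Suc n)) * real (Suc n) powr - x" for n
  proof -
    have "norm (f (Suc n) * of_nat (Suc n) powr - s) = norm (f (Suc n)) * real (Suc n) powr - Re s"
      by (simp add: norm_mult norm_powr_real_powr)
    also have "\<dots> \<le> norm (f (Suc n)) * real (Suc n) powr - x"
      using x(2) by (intro mult_left_mono powr_mono) auto
    finally show ?thesis .
  qed
  then have "summable (\<lambda>n. f (Suc n) * of_nat (Suc n) powr - s)"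
    by (intro summable_comparison_test[OF _ x(1)]) auto
  then show ?thesis
    unfolding Lser_def by (rule summable_sums)
qed

text \<open>The functions F_j of the paper have the form delta^-s (G *_gamma delta^s h).\<close>
definition twisted_gconv :: "complex \<Rightarrow> nat \<Rightarrow> (nat \<Rightarrow> complex) \<Rightarrow> (nat \<Rightarrow> complex) \<Rightarrow> nat \<Rightarrow> complex" where
  "twisted_gconv s \<gamma> G h x = of_nat x powr - s * gconv \<gamma> G (\<lambda>y. of_nat y powr s * h y) x"

lemma twisted_gconv_eq_sum:
  assumes "1 \<le> n"
  shows "twisted_gconv s \<gamma> G h n =
    (\<Sum>d | 1 \<le> d \<and> d ^ \<gamma> dvd n. of_nat (d ^ \<gamma>) powr - s * h (n div d ^ \<gamma>) * G (d ^ \<gamma>))"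
  unfolding twisted_gconv_def gconv_def sum_distrib_left
proof (rule sum.cong)
  fix d assume "d \<in> {d. 1 \<le> d \<and> d ^ \<gamma> dvd n}"
  then obtain q where q: "n = d ^ \<gamma> * q" "1 \<le> d" by auto
  with assms have "1 \<le> q" by (cases q) auto
  have "n div d ^ \<gamma> = q" using q by simp
  moreover have "(of_nat q :: complex) powr - s * of_nat q powr s = 1"
    using \<open>1 \<le> q\<close> by (simp add: powr_minus)
  ultimately have "(of_nat n :: complex) powr - s * of_nat (n div d ^ \<gamma>) powr s = of_nat (d ^ \<gamma>) powr - s"
    by (simp only: q(1) of_nat_mult_powr mult.assoc mult_1_right)
  then show "of_nat n powr - s * (of_nat (n div d ^ \<gamma>) powr s * h (n div d ^ \<gamma>) * G (d ^ \<gamma>)) =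
      of_nat (d ^ \<gamma>) powr - s * h (n div d ^ \<gamma>) * G (d ^ \<gamma>)"
    by (simp add: mult.assoc[symmetric])
qed simp

lemma Ssum_Dirichlet_series_first:
  assumes "1 \<le> g" "\<forall>i<length gs. 1 \<le> gs ! i" "1 \<le> n1" "abs_abscissa f < ereal (Re s)"
  shows "(\<lambda>n. Ssum (g # gs) (f # fs) (Suc n # n1 # ns) * of_nat (Suc n) powr - s) sums
           (Lser s f * twisted_gconv s g (\<lambda>x. Ssum gs fs (x # ns)) (\<lambda>_. 1) n1)"
proof -
  define G where "G x = Ssum gs fs (x # ns)" for x
  define D where "D = {d. 1 \<le> d \<and> d ^ g dvd n1}"
  have "finite D" unfolding D_def using assms(3,1) by (rule finite_root_divisors)
  have "Ssum (g # gs) (f # fs) (Suc n # n1 # ns) = (\<Sum>d\<in>D. G (d ^ g) * qev f (Suc n) (d ^ g))" for n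
  proof -
    have "Ssum (g # gs) (f # fs) (Suc n # n1 # ns) =
        (\<Sum>d | 1 \<le> d \<and> d ^ g dvd Suc n \<and> d ^ g dvd n1. qev f (Suc n) (d ^ g) * G (d ^ g))"
      unfolding G_def using assms(1,2) by (intro Ssum_Cons) auto
    also have "\<dots> = (\<Sum>d\<in>D. qev f (Suc n) (d ^ g) * G (d ^ g))"
      using \<open>finite D\<close> by (intro sum.mono_neutral_left) (auto simp: D_def qev_def)
    finally show ?thesis by (simp add: mult.commute)
  qed
  moreover have "(\<lambda>n. (\<Sum>d\<in>D. G (d ^ g) * qev f (Suc n) (d ^ g)) * of_nat (Suc n) powr - s) sums
      (Lser s f * (\<Sum>d\<in>D. G (d ^ g) * of_nat (d ^ g) powr - s))"
    using \<open>finite D\<close> Lser_sums[OF assms(4)] by (intro sums_Dirichlet_sum_dilates) (auto simp: D_def)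
  moreover have "twisted_gconv s g G (\<lambda>_. 1) n1 = (\<Sum>d\<in>D. G (d ^ g) * of_nat (d ^ g) powr - s)"
    using assms(3) by (simp add: twisted_gconv_eq_sum D_def mult.commute)
  ultimately show ?thesis
    unfolding G_def by simp
qed

lemma Ssum_Dirichlet_series_second:
  assumes "1 \<le> g" "\<forall>i<length gs. 1 \<le> gs ! i" "1 \<le> n0" "1 < Re s"
  shows "(\<lambda>n. Ssum (g # gs) (f # fs) (n0 # Suc n # ns) * of_nat (Suc n) powr - s) sums
           (zeta s * twisted_gconv s g (\<lambda>x. Ssum gs fs (x # ns)) f n0)"
proof -
  define G where "G x = Ssum gs fs (x # ns)" for x
  define D where "D = {d. 1 \<le> d \<and> d ^ g dvd n0}"
  define c where "c d = qev f n0 (d ^ g) * G (d ^ g)" for d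
  have "finite D" unfolding D_def using assms(3,1) by (rule finite_root_divisors)
  have "Ssum (g # gs) (f # fs) (n0 # Suc n # ns) = (\<Sum>d\<in>D. c d * qev (\<lambda>_. 1) (Suc n) (d ^ g))" for n
  proof -
    have "Ssum (g # gs) (f # fs) (n0 # Suc n # ns) =
        (\<Sum>d | 1 \<le> d \<and> d ^ g dvd n0 \<and> d ^ g dvd Suc n. c d)"
      unfolding G_def c_def using assms by (intro Ssum_Cons) auto
    also have "\<dots> = (\<Sum>d\<in>D. c d * qev (\<lambda>_. 1) (Suc n) (d ^ g))"
      using \<open>finite D\<close> by (intro sum.mono_neutral_cong_left) (auto simp: D_def qev_def)
    finally show ?thesis .
  qed
  moreover have "(\<lambda>n. (\<Sum>d\<in>D. c d * qev (\<lambda>_. 1) (Suc n) (d ^ g)) * of_nat (Suc n) powr - s) sums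
      (zeta s * (\<Sum>d\<in>D. c d * of_nat (d ^ g) powr - s))"
    using \<open>finite D\<close> zeta_sums[OF assms(4)] by (intro sums_Dirichlet_sum_dilates) (auto simp: D_def)
  moreover have "twisted_gconv s g G f n0 = (\<Sum>d\<in>D. c d * of_nat (d ^ g) powr - s)"
    using assms(3) by (auto simp: twisted_gconv_eq_sum D_def c_def qev_def mult_ac intro!: sum.cong)
  ultimately show ?thesis
    unfolding G_def by simp
qed

lemma Ssum_Dirichlet_series_later:
  assumes "1 < Re s" "p < length gs" "Suc p < length ns" "length fs = Suc (length gs)"
    and "\<forall>i<length gs. 1 \<le> gs ! i" "1 \<le> ns ! 0"
  shows "(\<lambda>n. Ssum gs fs (ns[Suc p := Suc n]) * of_nat (Suc n) powr - s) sums
      (zeta s * Ssum (take p gs)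
        (take p fs @ [twisted_gconv s (gs ! p)
           (\<lambda>x. Ssum (drop (Suc p) gs) (drop (Suc p) fs) (x # drop (Suc (Suc p)) ns)) (fs ! p)])
        (take (Suc p) ns))"
  using assms(2-)
proof (induction p arbitrary: gs fs ns)
  case 0
  obtain g gs' f fs' n0 n1 rest where lists: "gs = g # gs'" "fs = f # fs'" "ns = n0 # n1 # rest"
    using "0.prems"(1-3) by (cases gs; cases fs; cases ns rule: remdups_adj.cases) auto
  have "1 \<le> g" "\<forall>i<length gs'. 1 \<le> gs' ! i" "1 \<le> n0"
    using "0.prems"(4,5) by (auto simp: lists)
  from Ssum_Dirichlet_series_second[OF this assms(1)] show ?case
    by (simp add: lists Ssum_single)
next
  case (Suc p)
  obtain g gs' f fs' n0 n1 rest where lists: "gs = g # gs'" "fs = f # fs'" "ns = n0 # n1 # rest"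
    using Suc.prems(1-3) by (cases gs; cases fs; cases ns rule: remdups_adj.cases) auto
  have g: "1 \<le> g" and gs': "\<forall>i<length gs'. 1 \<le> gs' ! i" and "1 \<le> n0"
    using Suc.prems(4,5) by (auto simp: lists)
  define D where "D = {d. 1 \<le> d \<and> d ^ g dvd n0 \<and> d ^ g dvd n1}"
  define F where "F = twisted_gconv s (gs' ! p)
    (\<lambda>x. Ssum (drop (Suc p) gs') (drop (Suc p) fs') (x # drop (Suc p) rest)) (fs' ! p)"
  define T where "T e = Ssum (take p gs') (take p fs' @ [F]) (e # take p rest)" for e
  have IH: "(\<lambda>n. Ssum gs' fs' ((d ^ g # rest)[Suc p := Suc n]) * of_nat (Suc n) powr - s) sums
      (zeta s * T (d ^ g))" if "d \<in> D" for d
    using Suc.IH[of gs' "d ^ g # rest" fs'] Suc.prems(1-3) gs' that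
    by (simp add: lists D_def T_def F_def)
  have "Ssum gs fs (ns[Suc (Suc p) := Suc n]) * of_nat (Suc n) powr - s =
      (\<Sum>d\<in>D. qev f n0 (d ^ g) * (Ssum gs' fs' ((d ^ g # rest)[Suc p := Suc n]) * of_nat (Suc n) powr - s))"
    for n
    using Ssum_Cons[OF \<open>1 \<le> n0\<close> g gs', of f fs' n1 "rest[p := Suc n]"]
    by (simp add: lists D_def sum_distrib_right mult.assoc)
  moreover have "(\<lambda>n. \<Sum>d\<in>D. qev f n0 (d ^ g) * (Ssum gs' fs' ((d ^ g # rest)[Suc p := Suc n]) *
      of_nat (Suc n) powr - s)) sums (\<Sum>d\<in>D. qev f n0 (d ^ g) * (zeta s * T (d ^ g)))"
    using IH by (intro sums_sum sums_mult)
  moreover have "Ssum (g # take p gs') (f # take p fs' @ [F]) (n0 # n1 # take p rest) =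
      (\<Sum>d\<in>D. qev f n0 (d ^ g) * T (d ^ g))"
    unfolding D_def T_def using \<open>1 \<le> n0\<close> g gs' by (intro Ssum_Cons) auto
  ultimately show ?case
    by (simp add: lists F_def sum_distrib_left mult_ac)
qed

theorem proposition3p1:
  fixes m :: nat and gs :: "nat list" and fs :: "(nat \<Rightarrow> complex) list"
    and ns :: "nat list" and s :: complex
  assumes "1 \<le> m"
    and "length gs = m" and "\<forall>i<m. 1 \<le> gs ! i"
    and "length fs = m + 1"
    and "length ns = m + 1" and "\<forall>i<m + 1. 1 \<le> ns ! i"
  shows
   "(ereal (Re s) > abs_abscissa (fs ! 0) \<longrightarrow>
      (\<lambda>n. Ssum gs fs (ns[0 := Suc n]) * of_nat (Suc n) powr (- s)) sums
        (Lser s (fs ! 0) *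
          (let G2 = (\<lambda>x. Ssum (drop 1 gs) (drop 1 fs) (x # drop 2 ns));
               F1 = (\<lambda>x. of_nat x powr (- s) * gconv (gs ! 0) G2 (\<lambda>y. of_nat y powr s) x)
           in F1 (ns ! 1))))
    \<and>
    (\<forall>j. 2 \<le> j \<and> j \<le> m + 1 \<and> 1 < Re s \<longrightarrow>
      (\<lambda>n. Ssum gs fs (ns[j - 1 := Suc n]) * of_nat (Suc n) powr (- s)) sums
        (zeta s *
          (let Gj = (\<lambda>x. Ssum (drop (j - 1) gs) (drop (j - 1) fs) (x # drop j ns));
               Fj = (\<lambda>x. of_nat x powr (- s) *
                      gconv (gs ! (j - 2)) Gj (\<lambda>y. of_nat y powr s * (fs ! (j - 2)) y) x)
           in Ssum (take (j - 2) gs) (take (j - 2) fs @ [Fj]) (take (j - 1) ns))))"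
proof -
  obtain g gs' f fs' n0 n1 rest where lists: "gs = g # gs'" "fs = f # fs'" "ns = n0 # n1 # rest"
    using assms(1,2,4,5) by (cases gs; cases fs; cases ns rule: remdups_adj.cases) auto
  have "1 \<le> g" "\<forall>i<length gs'. 1 \<le> gs' ! i" "1 \<le> n1"
    using assms(1-3,6) by (auto simp: lists)
  note first = Ssum_Dirichlet_series_first[OF this, of f s fs' rest]
  show ?thesis
    apply (intro conjI allI impI)
    subgoal using first by (simp add: lists twisted_gconv_def)
    subgoal for j
      using Ssum_Dirichlet_series_later[of s "j - 2" gs ns fs, unfolded twisted_gconv_def] assms(2-6)
      by (auto simp: Suc_diff_Suc numeral_2_eq_2)
    done
qed

end
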